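(* Let $p:\mathbb R^n\to\mathbb R$ be a polynomial with $p(\theta_0)=0$, and assume $p$ is nonnegative on the ball $B_\epsilon(\theta_0)$ centered at $\theta_0$ for some radius $\epsilon>0$. If $m\ge n/2$, then $\int_{B_\epsilon(\theta_0)}p(\theta)^{-m}\,\mathrm d\mu(\theta)=\infty$, where $\mu$ is Lebesgue measure. *)

theory Defs
  imports "HOL-Analysis.Analysis"
begin

inductive real_poly_fun :: "(real ^ 'n \<Rightarrow> real) \<Rightarrow> bool" where
  const: "real_poly_fun (\<lambda>x. c)"
| coord: "real_poly_fun (\<lambda>x. x $ i)"
| add: "real_poly_fun p \<Longrightarrow> real_poly_fun q \<Longrightarrow> real_poly_fun (\<lambda>x. p x + q x)"
| mult: "real_poly_fun p \<Longrightarrow> real_poly_fun q \<Longrightarrow> real_poly_fun (\<lambda>x. p x * q x)"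

definition neg_pow_ennreal :: "real \<Rightarrow> real \<Rightarrow> ennreal" where
  "neg_pow_ennreal t m = (if t = 0 then \<infinity> else ennreal (t powr (- m)))"

end

theory Submission
  imports Defs
begin

(* Polynomials are smooth, so p(theta0 + h) = p(theta0) + g . h + O(|h|^2) on the unit ball.
   As theta0 is a local minimum the gradient g vanishes, hence p(theta) <= C |theta - theta0|^2
   near theta0, and for 2m >= n this gives p(theta)^(-m) >= K |theta - theta0|^(-n).
   The latter is not integrable near theta0: every dyadic annulus r/2^(k+1) <= |x - x0| < r/2^k
   contributes the same positive amount to the integral. *)

definition has_quadratic_remainder :: "('a::real_inner \<Rightarrow> real) \<Rightarrow> 'a \<Rightarrow> 'a \<Rightarrow> bool" where
  "has_quadratic_remainder f g x \<longleftrightarrow>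
     (\<exists>C\<ge>0. \<forall>h. norm h \<le> 1 \<longrightarrow> \<bar>f (x + h) - f x - g \<bullet> h\<bar> \<le> C * (norm h)\<^sup>2)"

lemma has_quadratic_remainder_const: "has_quadratic_remainder (\<lambda>_. c) 0 x"
  by (auto simp: has_quadratic_remainder_def)

lemma has_quadratic_remainder_inner: "has_quadratic_remainder (\<lambda>y. a \<bullet> y) a x"
  by (auto simp: has_quadratic_remainder_def inner_add_right)

lemma has_quadratic_remainder_add:
  assumes "has_quadratic_remainder f g1 x" and "has_quadratic_remainder q g2 x"
  shows "has_quadratic_remainder (\<lambda>y. f y + q y) (g1 + g2) x"
proof -
  obtain C1 C2 where "C1 \<ge> 0" "C2 \<ge> 0"
    and "\<forall>h. norm h \<le> 1 \<longrightarrow> \<bar>f (x + h) - f x - g1 \<bullet> h\<bar> \<le> C1 * (norm h)\<^sup>2"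
    and "\<forall>h. norm h \<le> 1 \<longrightarrow> \<bar>q (x + h) - q x - g2 \<bullet> h\<bar> \<le> C2 * (norm h)\<^sup>2"
    using assms by (auto simp: has_quadratic_remainder_def)
  then show ?thesis
    unfolding has_quadratic_remainder_def
    by (intro exI[of _ "C1 + C2"]) (force simp: inner_add_left distrib_right)
qed

lemma quadratic_remainder_increment_bound:
  assumes "0 \<le> C" and "norm h \<le> 1"
    and "\<bar>f (x + h) - f x - g \<bullet> h\<bar> \<le> C * (norm h)\<^sup>2"
  shows "\<bar>f (x + h) - f x\<bar> \<le> (norm g + C) * norm h"
proof -
  have "C * (norm h)\<^sup>2 \<le> C * norm h"
    using assms(1,2) by (intro mult_left_mono) (auto simp: power2_eq_square mult_left_le)
  then show ?thesis
    using assms(3) Cauchy_Schwarz_ineq2[of g h] by (simp add: distrib_right)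
qed

lemma has_quadratic_remainder_mult:
  assumes "has_quadratic_remainder f g1 x" and "has_quadratic_remainder q g2 x"
  shows "has_quadratic_remainder (\<lambda>y. f y * q y) (f x *\<^sub>R g2 + q x *\<^sub>R g1) x"
proof -
  obtain C1 C2 where C: "C1 \<ge> 0" "C2 \<ge> 0"
    and f: "\<And>h. norm h \<le> 1 \<Longrightarrow> \<bar>f (x + h) - f x - g1 \<bullet> h\<bar> \<le> C1 * (norm h)\<^sup>2"
    and q: "\<And>h. norm h \<le> 1 \<Longrightarrow> \<bar>q (x + h) - q x - g2 \<bullet> h\<bar> \<le> C2 * (norm h)\<^sup>2"
    using assms by (auto simp: has_quadratic_remainder_def)
  define C where "C = \<bar>f x\<bar> * C2 + \<bar>q x\<bar> * C1 + (norm g1 + C1) * (norm g2 + C2)"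
  have "\<bar>f (x + h) * q (x + h) - f x * q x - (f x *\<^sub>R g2 + q x *\<^sub>R g1) \<bullet> h\<bar> \<le> C * (norm h)\<^sup>2"
    if h: "norm h \<le> 1" for h
  proof -
    define a where "a = f (x + h) - f x - g1 \<bullet> h"
    define b where "b = q (x + h) - q x - g2 \<bullet> h"
    define \<Delta>f where "\<Delta>f = f (x + h) - f x"
    define \<Delta>q where "\<Delta>q = q (x + h) - q x"
    have "\<bar>\<Delta>f\<bar> * \<bar>\<Delta>q\<bar> \<le> ((norm g1 + C1) * norm h) * ((norm g2 + C2) * norm h)"
      unfolding \<Delta>f_def \<Delta>q_def using C h f q
      by (intro mult_mono quadratic_remainder_increment_bound) auto
    moreover have "\<bar>f x\<bar> * \<bar>b\<bar> \<le> \<bar>f x\<bar> * (C2 * (norm h)\<^sup>2)"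
      using q[OF h] by (intro mult_left_mono) (auto simp: b_def)
    moreover have "\<bar>q x\<bar> * \<bar>a\<bar> \<le> \<bar>q x\<bar> * (C1 * (norm h)\<^sup>2)"
      using f[OF h] by (intro mult_left_mono) (auto simp: a_def)
    moreover have "f (x + h) * q (x + h) - f x * q x - (f x *\<^sub>R g2 + q x *\<^sub>R g1) \<bullet> h
        = f x * b + q x * a + \<Delta>f * \<Delta>q"
      by (simp add: a_def b_def \<Delta>f_def \<Delta>q_def inner_add_left algebra_simps)
    moreover have "\<bar>f x * b + q x * a + \<Delta>f * \<Delta>q\<bar> \<le> \<bar>f x\<bar> * \<bar>b\<bar> + \<bar>q x\<bar> * \<bar>a\<bar> + \<bar>\<Delta>f\<bar> * \<bar>\<Delta>q\<bar>"
      unfolding abs_mult[symmetric] by linarith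
    ultimately show ?thesis
      by (simp add: C_def algebra_simps power2_eq_square)
  qed
  moreover have "C \<ge> 0"
    using C by (simp add: C_def)
  ultimately show ?thesis
    unfolding has_quadratic_remainder_def by blast
qed

lemma real_poly_fun_has_quadratic_remainder:
  fixes p :: "real ^ 'n \<Rightarrow> real"
  assumes "real_poly_fun p"
  shows "\<exists>g. has_quadratic_remainder p g x"
  using assms
proof (induction p)
  case (const c)
  show ?case using has_quadratic_remainder_const by blast
next
  case (coord i)
  show ?case
    using has_quadratic_remainder_inner[of "axis i 1" x] by (auto simp: inner_axis')
next
  case (add p q)
  then show ?case using has_quadratic_remainder_add by blast
next
  case (mult p q)
  then show ?case using has_quadratic_remainder_mult by blast
qed

lemma has_quadratic_remainder_local_min:
  assumes "has_quadratic_remainder f g x" and "e > 0"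
    and min: "\<And>y. y \<in> ball x e \<Longrightarrow> f x \<le> f y"
  shows "g = 0"
proof (rule ccontr)
  assume "g \<noteq> 0"
  then have ng: "norm g > 0" by simp
  obtain C where C: "C \<ge> 0"
    and rem: "\<And>h. norm h \<le> 1 \<Longrightarrow> \<bar>f (x + h) - f x - g \<bullet> h\<bar> \<le> C * (norm h)\<^sup>2"
    using assms(1) by (auto simp: has_quadratic_remainder_def)
  define s where "s = min (min 1 (e / 2)) (norm g / (C + 1))"
  have s: "0 < s" "s \<le> 1" "s < e"
    using \<open>e > 0\<close> ng C by (auto simp: s_def)
  have "C * s \<le> C * (norm g / (C + 1))"
    using C by (intro mult_left_mono) (auto simp: s_def)
  also have "\<dots> < norm g"
    using C ng by (simp add: field_simps)
  finally have "C * s\<^sup>2 < s * norm g"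
    using s by (simp add: power2_eq_square)
  define h where "h = - (s / norm g) *\<^sub>R g"
  have "norm h = s" and "g \<bullet> h = - s * norm g"
    using ng s by (auto simp: h_def power2_norm_eq_inner[symmetric] power2_eq_square)
  then have "f (x + h) < f x"
    using rem[of h] s \<open>C * s\<^sup>2 < s * norm g\<close> by simp
  moreover have "x + h \<in> ball x e"
    using \<open>norm h = s\<close> s by (simp add: dist_norm)
  ultimately show False
    using min by fastforce
qed

lemma nn_integral_eq_infinity_disjoint_family:
  fixes A :: "nat \<Rightarrow> 'a set"
  assumes f: "f \<in> borel_measurable M"
    and A: "\<And>k. A k \<in> sets M" "disjoint_family A" "(\<Union>k. A k) \<subseteq> S"
    and "c > 0" and bound: "\<And>k. ennreal c \<le> (\<integral>\<^sup>+ x \<in> A k. f x \<partial>M)"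
  shows "(\<integral>\<^sup>+ x \<in> S. f x \<partial>M) = \<infinity>"
proof -
  have "(\<Sum>k::nat. ennreal c) = top"
    using \<open>c > 0\<close> by (intro summable_iff_suminf_neq_top) (auto simp: summable_const_iff)
  then have "\<infinity> = (\<Sum>k::nat. ennreal c)"
    by simp
  also have "\<dots> \<le> (\<Sum>k. \<integral>\<^sup>+ x \<in> A k. f x \<partial>M)"
    by (intro suminf_le bound) auto
  also have "\<dots> = (\<integral>\<^sup>+ x \<in> (\<Union>k. A k). f x \<partial>M)"
    by (rule nn_integral_disjoint_family[OF f A(1,2), symmetric])
  also have "\<dots> \<le> (\<integral>\<^sup>+ x \<in> S. f x \<partial>M)"
    by (rule nn_set_integral_set_mono[OF A(3)])
  finally show ?thesis
    by (simp add: top_unique)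
qed

lemma nn_integral_annulus_norm_powr_neg_dim:
  fixes x0 :: "'a::euclidean_space"
  assumes "a > 0"
  shows "ennreal (unit_ball_vol DIM('a) * (1 - 1 / 2 ^ DIM('a)))
    \<le> (\<integral>\<^sup>+ x \<in> ball x0 a - ball x0 (a / 2). ennreal (norm (x - x0) powr - real DIM('a)) \<partial>lborel)"
    (is "_ \<le> (\<integral>\<^sup>+ x \<in> ?A. _ \<partial>lborel)")
proof -
  define d where "d = DIM('a)"
  define V where "V = unit_ball_vol d"
  have "emeasure lborel ?A = emeasure lborel (ball x0 a) - emeasure lborel (ball x0 (a / 2))"
    using \<open>a > 0\<close> by (intro emeasure_Diff) (auto simp: emeasure_ball)
  also have "\<dots> = ennreal (V * a ^ d - V * (a / 2) ^ d)"
    using \<open>a > 0\<close> by (simp add: emeasure_ball V_def d_def ennreal_minus power_mono)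
  finally have measure_A: "emeasure lborel ?A = ennreal (V * a ^ d - V * (a / 2) ^ d)" .
  have "a powr - real d * a ^ d = 1"
    using \<open>a > 0\<close> by (simp add: powr_minus powr_realpow)
  then have "V * (1 - 1 / 2 ^ d) = a powr - real d * (V * a ^ d - V * (a / 2) ^ d)"
    by (simp add: power_divide algebra_simps)
  then have "ennreal (V * (1 - 1 / 2 ^ d)) = ennreal (a powr - real d) * emeasure lborel ?A"
    by (simp add: measure_A ennreal_mult')
  also have "\<dots> = (\<integral>\<^sup>+ x. ennreal (a powr - real d) * indicator ?A x \<partial>lborel)"
    by (simp add: nn_integral_cmult_indicator)
  also have "\<dots> \<le> (\<integral>\<^sup>+ x \<in> ?A. ennreal (norm (x - x0) powr - real d) \<partial>lborel)"
  proof (rule nn_integral_mono)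
    fix x
    have "a powr - real d \<le> norm (x - x0) powr - real d" if "x \<in> ?A"
      using that \<open>a > 0\<close> by (intro powr_mono2') (auto simp: dist_norm norm_minus_commute)
    then show "ennreal (a powr - real d) * indicator ?A x
      \<le> ennreal (norm (x - x0) powr - real d) * indicator ?A x"
      by (auto split: split_indicator)
  qed
  finally show ?thesis
    by (simp add: V_def d_def)
qed

lemma nn_integral_ball_norm_powr_neg_dim:
  fixes x0 :: "'a::euclidean_space"
  assumes "r > 0"
  shows "(\<integral>\<^sup>+ x \<in> ball x0 r. ennreal (norm (x - x0) powr - real DIM('a)) \<partial>lborel) = \<infinity>"
proof -
  define a where "a k = r / 2 ^ k" for k :: nat
  define A where "A k = ball x0 (a k) - ball x0 (a k / 2)" for k
  have a: "0 < a k" "a k \<le> r" "a (Suc k) = a k / 2" for k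
    using \<open>r > 0\<close> by (auto simp: a_def field_simps)
  have "A k = - ball x0 (a (Suc k)) - - ball x0 (a k)" for k
    by (auto simp: A_def a)
  moreover have "- ball x0 (a k) \<subseteq> - ball x0 (a (Suc k))" for k
    using a(1)[of k] by (auto simp: a(3))
  ultimately have disjoint: "disjoint_family A"
    using disjoint_family_Suc[of "\<lambda>k. - ball x0 (a k)"] by presburger
  have union: "(\<Union>k. A k) \<subseteq> ball x0 r"
    unfolding A_def using subset_ball[OF a(2)] by blast
  have sets: "A k \<in> sets lborel" for k
    by (simp add: A_def)
  have pos: "0 < unit_ball_vol DIM('a) * (1 - 1 / 2 ^ DIM('a))"
    by (simp add: field_simps)
  show ?thesis
  proof (rule nn_integral_eq_infinity_disjoint_family[OF _ sets disjoint union pos,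
        where f = "\<lambda>x. ennreal (norm (x - x0) powr - real DIM('a))"])
    show "(\<lambda>x. ennreal (norm (x - x0) powr - real DIM('a))) \<in> borel_measurable lborel"
      by measurable
    show "ennreal (unit_ball_vol DIM('a) * (1 - 1 / 2 ^ DIM('a)))
      \<le> (\<integral>\<^sup>+ x \<in> A k. ennreal (norm (x - x0) powr - real DIM('a)) \<partial>lborel)" for k
      unfolding A_def by (rule nn_integral_annulus_norm_powr_neg_dim[OF a(1)])
  qed
qed

lemma neg_pow_ennreal_ge_powr:
  fixes t x C m n :: real
  assumes "0 \<le> t" "t \<le> C * x\<^sup>2" "0 \<le> C" "0 \<le> x" "x \<le> 1" "0 \<le> n" "n \<le> 2 * m"
  shows "ennreal ((C + 1) powr - m * x powr - n) \<le> neg_pow_ennreal t m"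
proof (cases "t = 0")
  case False
  then have "0 < t" "0 < x"
    using assms(1-4) by (auto simp: less_le)
  have "(C + 1) powr - m * x powr - n \<le> (C + 1) powr - m * x powr (- 2 * m)"
    using assms \<open>0 < x\<close> by (intro mult_left_mono powr_mono') auto
  also have "\<dots> = ((C + 1) * x\<^sup>2) powr - m"
  proof -
    have "x\<^sup>2 = x powr 2"
      using \<open>0 < x\<close> by (simp add: powr_numeral)
    then show ?thesis
      using assms(3) by (simp add: powr_mult powr_powr)
  qed
  also have "\<dots> \<le> t powr - m"
  proof (rule powr_mono2')
    show "t \<le> (C + 1) * x\<^sup>2"
      using assms(2) zero_le_power2[of x] unfolding distrib_right by linarith
  qed (use assms(6,7) \<open>0 < t\<close> in auto)
  finally show ?thesis
    using False by (simp add: neg_pow_ennreal_def ennreal_leI)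
qed (simp add: neg_pow_ennreal_def)

theorem propositionA4:
  fixes p :: "real ^ 'n \<Rightarrow> real" and \<theta>0 :: "real ^ 'n" and \<epsilon> m :: real
  assumes "real_poly_fun p"
    and "p \<theta>0 = 0"
    and "\<epsilon> > 0"
    and "\<forall>\<theta>\<in>ball \<theta>0 \<epsilon>. p \<theta> \<ge> 0"
    and "m \<ge> real CARD('n) / 2"
  shows "(\<integral>\<^sup>+ \<theta> \<in> ball \<theta>0 \<epsilon>. neg_pow_ennreal (p \<theta>) m \<partial>lborel) = \<infinity>"
proof -
  obtain g where g: "has_quadratic_remainder p g \<theta>0"
    using real_poly_fun_has_quadratic_remainder[OF assms(1)] by blast
  have "g = 0"
    using assms(2,4) by (intro has_quadratic_remainder_local_min[OF g assms(3)]) auto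
  then obtain C where "C \<ge> 0" and C: "\<And>h. norm h \<le> 1 \<Longrightarrow> p (\<theta>0 + h) \<le> C * (norm h)\<^sup>2"
    using g assms(2) by (force simp: has_quadratic_remainder_def)
  define r where "r = min 1 \<epsilon>"
  define K where "K = (C + 1) powr - m"
  have "0 < r" "ball \<theta>0 r \<subseteq> ball \<theta>0 \<epsilon>"
    using assms(3) by (auto simp: r_def)
  have "\<infinity> = ennreal K * (\<integral>\<^sup>+ \<theta> \<in> ball \<theta>0 r. ennreal (norm (\<theta> - \<theta>0) powr - real CARD('n)) \<partial>lborel)"
    using nn_integral_ball_norm_powr_neg_dim[OF \<open>0 < r\<close>, of \<theta>0] \<open>C \<ge> 0\<close>
    by (simp add: K_def ennreal_mult_top)
  also have "\<dots> = (\<integral>\<^sup>+ \<theta> \<in> ball \<theta>0 r. ennreal (K * norm (\<theta> - \<theta>0) powr - real CARD('n)) \<partial>lborel)"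
    by (subst nn_integral_cmult[symmetric]) (measurable, auto simp: K_def ennreal_mult mult.assoc)
  also have "\<dots> \<le> (\<integral>\<^sup>+ \<theta> \<in> ball \<theta>0 \<epsilon>. neg_pow_ennreal (p \<theta>) m \<partial>lborel)"
  proof (intro nn_integral_mono)
    fix \<theta> :: "real ^ 'n"
    show "ennreal (K * norm (\<theta> - \<theta>0) powr - real CARD('n)) * indicator (ball \<theta>0 r) \<theta>
      \<le> neg_pow_ennreal (p \<theta>) m * indicator (ball \<theta>0 \<epsilon>) \<theta>"
      using C[of "\<theta> - \<theta>0"] assms(4,5) \<open>C \<ge> 0\<close> \<open>ball \<theta>0 r \<subseteq> ball \<theta>0 \<epsilon>\<close>
      by (auto simp: K_def r_def dist_norm norm_minus_commute split: split_indicator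
          intro!: neg_pow_ennreal_ge_powr)
  qed
  finally show ?thesis
    by (simp add: top_unique)
qed

end
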